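(* Let $\mathcal V$ be a topological vector space over $\mathbb C$, $X$ a non-empty set, and $\mathbb C^X$ the vector space of all complex-valued functions on $X$. Let $T:\mathcal V\to\mathbb C^X$ be a map which is sublinear in the sense that for all $f,g\in\mathcal V$ and $\lambda\in\mathbb C$, $$|T(f+g)|\le |T(f)|+|T(g)|\quad\text{and}\quad |T(\lambda f)|=|\lambda|\,|T(f)|$$ (pointwise on $X$), and suppose that for every $x\in X$ the functional $T_x:\mathcal V\to\mathbb C$, $T_x(f):=T(f)(x)$, is continuous. Let $S=\{f\in\mathcal V: T(f)\text{ is unbounded on }X\}$. Then either $S=\emptyset$ or $S$ is dense and $G_\delta$ in $\mathcal V$.
   Context: No completeness of $\mathcal V$ is assumed. *)

theory Defs
  imports "HOL-Analysis.Analysis"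
begin

definition complex_tvs :: "(complex \<Rightarrow> 'v::{ab_group_add,topological_space} \<Rightarrow> 'v) \<Rightarrow> bool" where
  "complex_tvs sc \<longleftrightarrow>
     vector_space sc \<and>
     continuous_on UNIV (\<lambda>p::'v \<times> 'v. fst p + snd p) \<and>
     continuous_on UNIV (\<lambda>p::complex \<times> 'v. sc (fst p) (snd p))"

end

theory Submission
  imports Defs
begin

text \<open>The set of f with T f unbounded is the intersection over n of the sets of f for which
  some evaluation of T f exceeds n; each of these is open by the continuity of the evaluations,
  so the set is G-delta. If T g is unbounded and T f is bounded, then sublinearity
  gives that T (f + t g) is unbounded for every t \<noteq> 0; letting t tend to 0 along this line
  shows that f lies in the closure.\<close>

lemma unbounded_range_iff_norm_exceeds:
  fixes h :: "'x \<Rightarrow> 'a::real_normed_vector"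
  shows "\<not> bounded (range h) \<longleftrightarrow> (\<forall>n::nat. \<exists>x. real n < norm (h x))"
proof
  assume "\<not> bounded (range h)"
  then show "\<forall>n::nat. \<exists>x. real n < norm (h x)"
    unfolding bounded_iff by (auto simp: not_le)
next
  assume exceeds: "\<forall>n::nat. \<exists>x. real n < norm (h x)"
  show "\<not> bounded (range h)"
  proof
    assume "bounded (range h)"
    then obtain a where a: "\<And>x. norm (h x) \<le> a"
      unfolding bounded_iff by blast
    obtain n :: nat where "a < real n"
      using reals_Archimedean2 by blast
    moreover obtain x where "real n < norm (h x)"
      using exceeds by blast
    ultimately show False
      using a[of x] by linarith
  qed
qed

lemma gdelta_unbounded_of_continuous_evaluations:
  fixes T :: "'v::topological_space \<Rightarrow> 'x \<Rightarrow> 'a::real_normed_vector"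
  assumes cont: "\<And>x. continuous_on UNIV (\<lambda>f. T f x)"
  shows "gdelta {f. \<not> bounded (range (T f))}"
proof -
  define U where "U n = (\<Union>x. {f. real n < norm (T f x)})" for n :: nat
  have "open (U n)" for n
    unfolding U_def
    using open_Collect_less[OF continuous_on_const continuous_on_norm[OF cont]] by blast
  then have "gdelta (\<Inter>n. U n)"
    by (rule gdelta.intros)
  moreover have "(\<Inter>n. U n) = {f. \<not> bounded (range (T f))}"
    by (auto simp: U_def unbounded_range_iff_norm_exceeds)
  ultimately show ?thesis
    by simp
qed

lemma tendsto_at_in_closure:
  fixes \<gamma> :: "'a::perfect_space \<Rightarrow> 'b::topological_space"
  assumes "(\<gamma> \<longlongrightarrow> \<gamma> a) (at a)" and "\<And>t. t \<noteq> a \<Longrightarrow> \<gamma> t \<in> S"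
  shows "\<gamma> a \<in> closure S"
proof (rule Lim_in_closed_set[where F = "at a" and f = \<gamma>])
  show "eventually (\<lambda>t. \<gamma> t \<in> closure S) (at a)"
    using assms(2) closure_subset by (auto simp: eventually_at_filter intro!: always_eventually)
qed (use assms(1) in auto)

lemma complex_tvs_continuous_line:
  assumes "complex_tvs sc"
  shows "continuous_on UNIV (\<lambda>t. f + sc t g)"
proof -
  have add: "continuous_on UNIV (\<lambda>p::'a \<times> 'a. fst p + snd p)"
    and scale: "continuous_on UNIV (\<lambda>p::complex \<times> 'a. sc (fst p) (snd p))"
    using assms unfolding complex_tvs_def by auto
  have "continuous_on UNIV (\<lambda>t. sc t g)"
    using continuous_on_compose2[OF scale continuous_on_Pair[OF continuous_on_id continuous_on_const]]
    by simp
  then show ?thesis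
    using continuous_on_compose2[OF add continuous_on_Pair[OF continuous_on_const]]
    by simp
qed

lemma sublinear_unbounded_add_scaled:
  fixes sc :: "'k::real_normed_field \<Rightarrow> 'v::ab_group_add \<Rightarrow> 'v"
    and T :: "'v \<Rightarrow> 'x \<Rightarrow> 'a::real_normed_vector"
  assumes "vector_space sc"
    and subadd: "\<And>f g x. norm (T (f + g) x) \<le> norm (T f x) + norm (T g x)"
    and homog: "\<And>c f x. norm (T (sc c f) x) = norm c * norm (T f x)"
    and bounded_f: "bounded (range (T f))"
    and unbounded_g: "\<not> bounded (range (T g))"
    and "t \<noteq> 0"
  shows "\<not> bounded (range (T (f + sc t g)))"
proof
  interpret vector_space sc by (rule assms(1))
  assume "bounded (range (T (f + sc t g)))"
  then obtain b where b: "\<And>x. norm (T (f + sc t g) x) \<le> b"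
    unfolding bounded_iff by blast
  obtain a where a: "\<And>x. norm (T f x) \<le> a"
    using bounded_f unfolding bounded_iff by blast
  have norm_minus: "norm (T (- f) x) = norm (T f x)" for x
    using homog[of "-1" f x] by (simp add: scale_minus_left[symmetric])
  have "norm (T g x) \<le> (b + a) / norm t" for x
  proof -
    have "norm t * norm (T g x) = norm (T ((f + sc t g) + - f) x)"
      using homog[of t g x] by (simp add: add.commute)
    also have "\<dots> \<le> norm (T (f + sc t g) x) + norm (T (- f) x)"
      by (rule subadd)
    also have "\<dots> \<le> b + a"
      using a b norm_minus by (simp add: add_mono)
    finally show ?thesis
      using \<open>t \<noteq> 0\<close> by (simp add: field_simps)
  qed
  then have "bounded (range (T g))"
    unfolding bounded_iff by blast
  with unbounded_g show False ..
qed

theorem mainTheorem1: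
  fixes sc :: "complex \<Rightarrow> 'v::{ab_group_add,topological_space} \<Rightarrow> 'v"
    and T :: "'v \<Rightarrow> 'x \<Rightarrow> complex"
  assumes tvs: "complex_tvs sc"
    and subadd: "\<And>f g x. cmod (T (f + g) x) \<le> cmod (T f x) + cmod (T g x)"
    and homog: "\<And>c f x. cmod (T (sc c f) x) = cmod c * cmod (T f x)"
    and cont: "\<And>x. continuous_on UNIV (\<lambda>f. T f x)"
  shows "{f. \<not> bounded (range (T f))} = {} \<or>
         (closure {f. \<not> bounded (range (T f))} = UNIV \<and> gdelta {f. \<not> bounded (range (T f))})"
proof (cases "{f. \<not> bounded (range (T f))} = {}")
  case False
  then obtain g where g: "\<not> bounded (range (T g))"
    by blast
  have vs: "vector_space sc"
    using tvs unfolding complex_tvs_def by blast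
  interpret vector_space sc by (rule vs)
  have "f \<in> closure {f. \<not> bounded (range (T f))}" for f
  proof (cases "bounded (range (T f))")
    case True
    have "((\<lambda>t. f + sc t g) \<longlongrightarrow> f + sc 0 g) (at 0)"
      using complex_tvs_continuous_line[OF tvs] by (simp add: continuous_on_def del: scale_zero_left)
    from tendsto_at_in_closure[OF this]
    show ?thesis
      using sublinear_unbounded_add_scaled[OF vs subadd homog True g]
      by simp
  qed (simp add: closure_subset[THEN subsetD])
  then show ?thesis
    using gdelta_unbounded_of_continuous_evaluations[of T, OF cont] by blast
qed simp

end
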